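(* In the setting described in the context, the matrices $\boldsymbol{\Psi}\in\mathbb{C}^{(2D-2)\times(2D-2)}$ and $\mathbf{F}\in\mathbb{C}^{(M^2-M)\times(M^2-M)}$ are non-singular, and $\overline{\mathbf{J}}\in\{0,1\}^{(M^2-M)\times(2D-2)}$ has full column rank.
   Context: Let $\{m_1,\dots,m_M\}$ be $M$ distinct integers, $\mathbb{D}=\{|m_p-m_q|:1\le p,q\le M\}=\{\ell_0,\dots,\ell_{D-1}\}$ with $0=\ell_0<\ell_1<\dots<\ell_{D-1}$. For $0\le n\le D-1$ let $\mathbf{L}_n\in\{0,1\}^{M\times M}$ with $[\mathbf{L}_n]_{p,q}=1$ if $m_p-m_q=\ell_n$ and $0$ otherwise. Let $\mathbf{J}=[\mathrm{vec}(\mathbf{L}_{D-1}^T),\dots,\mathrm{vec}(\mathbf{L}_1^T),\mathrm{vec}(\mathbf{L}_0),\mathrm{vec}(\mathbf{L}_1),\dots,\mathrm{vec}(\mathbf{L}_{D-1})]\in\{0,1\}^{M^2\times(2D-1)}$ ($\mathrm{vec}$ stacks columns). The indices $(i-1)M+i$, $1\le i\le M$, are the positions of the diagonal entries in $\mathrm{vec}$ of an $M\times M$ matrix. $\overline{\mathbf{J}}$ is obtained from $\mathbf{J}$ by removing its $D$-th column and its rows with indices $(i-1)M+i$, $1\le i\le M$. $\boldsymbol{\Psi}=\begin{bmatrix}\mathbf{I}_{D-1}&-j\mathbf{I}_{D-1}\\ \mathbf{I}_{D-1}&j\mathbf{I}_{D-1}\end{bmatrix}$. Let $\overline{\mathbf{e}}_p\in\mathbb{R}^M$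 be the $p$-th standard basis vector. For $1\le p<q\le M$ set $s(p,q)=(p-1)M+q-\frac{p(p+1)}{2}\in\{1,\dots,\frac{M^2-M}{2}\}$. Define $\ddot{\mathbf{F}},\widetilde{\mathbf{F}}\in\{0,\pm1\}^{\frac{M^2-M}{2}\times(M^2-M)}$ by: row $s(p,q)$ of $\ddot{\mathbf{F}}$ (resp. $\widetilde{\mathbf{F}}$) is obtained from the row vector $\overline{\mathbf{e}}_p^T\otimes\overline{\mathbf{e}}_q^T+\overline{\mathbf{e}}_q^T\otimes\overline{\mathbf{e}}_p^T$ (resp. $\overline{\mathbf{e}}_p^T\otimes\overline{\mathbf{e}}_q^T-\overline{\mathbf{e}}_q^T\otimes\overline{\mathbf{e}}_p^T$) by removing its entries with indices $(i-1)M+i$, $1\le i\le M$. Finally $\mathbf{F}=\frac12\begin{bmatrix}\ddot{\mathbf{F}}\\ j\widetilde{\mathbf{F}}\end{bmatrix}$. *)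

theory Defs
  imports Complex_Main "Jordan_Normal_Form.DL_Rank" "Jordan_Normal_Form.DL_Submatrix"
begin

text \<open>Conventions: the integers are m 1, ..., m M (1-based, as in the paper).
  Matrices of the Jordan_Normal_Form library are 0-based, so the paper's entry
  (p,q) is entry (p-1,q-1) here, and the paper's vec-index k (1-based) is k-1 here.\<close>

definition diffset :: "nat \<Rightarrow> (nat \<Rightarrow> int) \<Rightarrow> int set" where
  "diffset M m = {\<bar>m p - m q\<bar> | p q. p \<in> {1..M} \<and> q \<in> {1..M}}"

definition numD :: "nat \<Rightarrow> (nat \<Rightarrow> int) \<Rightarrow> nat" where
  "numD M m = card (diffset M m)"

definition lag :: "nat \<Rightarrow> (nat \<Rightarrow> int) \<Rightarrow> nat \<Rightarrow> int" where
  "lag M m n = sorted_list_of_set (diffset M m) ! n"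

definition Lmat :: "nat \<Rightarrow> (nat \<Rightarrow> int) \<Rightarrow> nat \<Rightarrow> complex mat" where
  "Lmat M m n = mat M M (\<lambda>(i,j). if m (i+1) - m (j+1) = lag M m n then 1 else 0)"

definition vecm :: "'a mat \<Rightarrow> 'a vec" where
  "vecm A = vec (dim_row A * dim_col A) (\<lambda>k. A $$ (k mod dim_row A, k div dim_row A))"

definition Jmat :: "nat \<Rightarrow> (nat \<Rightarrow> int) \<Rightarrow> complex mat" where
  "Jmat M m = (let D = numD M m in
     mat (M*M) (2*D-1) (\<lambda>(k,c).
       if c < D - 1 then vecm (transpose_mat (Lmat M m (D - 1 - c))) $ k
       else vecm (Lmat M m (c - (D - 1))) $ k))"

text \<open>Diagonal positions (i-1)M+i, 1<=i<=M, in 1-based vec indexing.\<close>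
definition diag_idx :: "nat \<Rightarrow> nat set" where
  "diag_idx M = {(i-1)*M + i | i. 1 \<le> i \<and> i \<le> M}"

definition Jbar :: "nat \<Rightarrow> (nat \<Rightarrow> int) \<Rightarrow> complex mat" where
  "Jbar M m = submatrix (Jmat M m) {k. Suc k \<notin> diag_idx M} {c. Suc c \<noteq> numD M m}"

definition Psi :: "nat \<Rightarrow> complex mat" where
  "Psi D = four_block_mat (1\<^sub>m (D-1)) ((-\<i>) \<cdot>\<^sub>m 1\<^sub>m (D-1))
                          (1\<^sub>m (D-1)) (\<i> \<cdot>\<^sub>m 1\<^sub>m (D-1))"

definition sidx :: "nat \<Rightarrow> nat \<Rightarrow> nat \<Rightarrow> nat" where
  "sidx M p q = (p-1)*M + q - p*(p+1) div 2"

text \<open>Row vector e_p^T (Kronecker) e_q^T of length M^2 (0-based index).\<close>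
definition kron_e :: "nat \<Rightarrow> nat \<Rightarrow> nat \<Rightarrow> complex vec" where
  "kron_e M p q = vec (M*M) (\<lambda>k. if k = (p-1)*M + (q-1) then 1 else 0)"

definition pq_of :: "nat \<Rightarrow> nat \<Rightarrow> nat \<times> nat" where
  "pq_of M r = (THE pq. 1 \<le> fst pq \<and> fst pq < snd pq \<and> snd pq \<le> M \<and> sidx M (fst pq) (snd pq) = r)"

definition Fdd_full :: "nat \<Rightarrow> complex mat" where
  "Fdd_full M = mat ((M*M - M) div 2) (M*M) (\<lambda>(r,k).
     (case pq_of M (Suc r) of (p,q) \<Rightarrow> (kron_e M p q + kron_e M q p) $ k))"

definition Ftil_full :: "nat \<Rightarrow> complex mat" where
  "Ftil_full M = mat ((M*M - M) div 2) (M*M) (\<lambda>(r,k).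
     (case pq_of M (Suc r) of (p,q) \<Rightarrow> (kron_e M p q - kron_e M q p) $ k))"

definition Fdd :: "nat \<Rightarrow> complex mat" where
  "Fdd M = submatrix (Fdd_full M) UNIV {k. Suc k \<notin> diag_idx M}"

definition Ftil :: "nat \<Rightarrow> complex mat" where
  "Ftil M = submatrix (Ftil_full M) UNIV {k. Suc k \<notin> diag_idx M}"

definition Fmat :: "nat \<Rightarrow> complex mat" where
  "Fmat M = (let N = (M*M - M) div 2 in
     mat (M*M - M) (M*M - M) (\<lambda>(i,j).
       if i < N then Fdd M $$ (i,j) / 2 else \<i> * Ftil M $$ (i - N, j) / 2))"

end

theory Submission
  imports Defs
begin

(* \<Psi> has the explicit inverse (1/2) [I I; iI -iI]; F and J-bar have trivial kernels.
   Each pair p < q gives two rows of F, (1/2) (e(p,q) + e(q,p)) and (i/2) (e(p,q) - e(q,p)), which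
   force the (p,q)- and (q,p)-coordinates of a kernel vector to vanish.  Column c of J marks the
   vec positions (p,q) with m p - m q equal to the c-th signed lag, in the order -l(D-1), ...,
   -l(1), l(0), ..., l(D-1).  The signed lags are distinct, so a position realising a nonzero one
   is a unit row of J; it lies off the diagonal and survives the deletion of the column of l(0).
   Hence J-bar has a unit row for every column, i.e. full column rank. *)

section \<open>Trivial kernels\<close>

lemma mult_mat_vec_unit_vec:
  fixes A :: "'a::semiring_1 mat"
  assumes "A \<in> carrier_mat n nc" "j < nc"
  shows "A *\<^sub>v unit_vec nc j = col A j"
  using assms by (intro eq_vecI) auto

lemma invertible_mat_if_trivial_kernel:
  fixes A :: "'a::field mat"
  assumes A: "A \<in> carrier_mat n n"
    and ker: "\<And>v. v \<in> carrier_vec n \<Longrightarrow> A *\<^sub>v v = 0\<^sub>v n \<Longrightarrow> v = 0\<^sub>v n"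
  shows "invertible_mat A"
proof -
  have "det A \<noteq> 0" using det_0_iff_vec_prod_zero_field[OF A] ker by blast
  from det_non_zero_imp_unit[OF A this, of "()"]
  obtain B where B: "B \<in> carrier_mat n n" "A * B = 1\<^sub>m n" "B * A = 1\<^sub>m n"
    unfolding Units_def ring_mat_def by auto
  show ?thesis unfolding invertible_mat_def inverts_mat_def
    using A B by (intro conjI exI[of _ B]) auto
qed

lemma rank_eq_dim_col_if_trivial_kernel:
  fixes A :: "'a::field mat"
  assumes A: "A \<in> carrier_mat n nc"
    and ker: "\<And>v. v \<in> carrier_vec nc \<Longrightarrow> A *\<^sub>v v = 0\<^sub>v n \<Longrightarrow> v = 0\<^sub>v nc"
  shows "vec_space.rank n A = nc"
proof -
  interpret vec_space "TYPE('a)" n .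
  have "distinct (cols A)"
  proof (rule ccontr)
    assume "\<not> distinct (cols A)"
    then obtain i j where ij: "i \<noteq> j" "i < nc" "j < nc" "col A i = col A j"
      using A by (auto simp: distinct_conv_nth)
    let ?v = "unit_vec nc i - unit_vec nc j :: 'a vec"
    have "A *\<^sub>v ?v = col A i - col A j"
      using A ij by (simp add: mult_minus_distrib_mat_vec mult_mat_vec_unit_vec)
    also have "\<dots> = 0\<^sub>v n" using A ij by auto
    finally have "?v = 0\<^sub>v nc" by (rule ker[rotated]) simp
    then have "?v $ i = 0" using ij by simp
    with ij show False by simp
  qed
  moreover have "lin_indpt (set (cols A))"
  proof
    assume "lin_dep (set (cols A))"
    from lin_depE[OF A this \<open>distinct (cols A)\<close>] ker show False by metis
  qed
  ultimately show ?thesis by (rule lin_indpt_full_rank[OF A])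
qed

lemma rank_eq_dim_col_if_unit_rows:
  fixes A :: "'a::field mat"
  assumes A: "A \<in> carrier_mat n nc"
    and unit_row: "\<And>c. c < nc \<Longrightarrow> \<exists>i<n. row A i = unit_vec nc c"
  shows "vec_space.rank n A = nc"
proof (rule rank_eq_dim_col_if_trivial_kernel[OF A])
  fix v :: "'a vec" assume v: "v \<in> carrier_vec nc" and Av: "A *\<^sub>v v = 0\<^sub>v n"
  show "v = 0\<^sub>v nc"
  proof (rule eq_vecI)
    fix c assume "c < dim_vec (0\<^sub>v nc :: 'a vec)"
    then obtain i where i: "i < n" "row A i = unit_vec nc c" "c < nc" using unit_row by auto
    have "v $ c = (A *\<^sub>v v) $ i" using A v i by simp
    with Av i show "v $ c = 0\<^sub>v nc $ c" by simp
  qed (use v in simp)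
qed

section \<open>Submatrices with infinite index sets\<close>

lemma pick_eq_iff_card_less:
  assumes "infinite S" "k \<in> S"
  shows "pick S j = k \<longleftrightarrow> j = card {a \<in> S. a < k}"
  using card_pick_inf[OF assms(1), of j] pick_card_in_set[OF assms(2)] by auto

lemma card_less_less_card:
  fixes k n :: nat
  assumes "k \<in> S" "k < n"
  shows "card {a \<in> S. a < k} < card {a. a < n \<and> a \<in> S}"
  using assms by (intro psubset_card_mono) auto

lemma row_submatrix_unit_vec:
  assumes J: "infinite J" and i: "i \<in> I" "i < dim_row A" and j: "j \<in> J"
    and row: "row A i = unit_vec (dim_col A) j"
  shows "row (submatrix A I J) (card {a \<in> I. a < i})
         = unit_vec (dim_col (submatrix A I J)) (card {a \<in> J. a < j})"
proof (rule eq_vecI)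
  fix j' assume "j' < dim_vec (unit_vec (dim_col (submatrix A I J)) (card {a \<in> J. a < j}))"
  then have j': "j' < card {a. a < dim_col A \<and> a \<in> J}" by (simp add: dim_submatrix)
  have "row (submatrix A I J) (card {a \<in> I. a < i}) $ j' = A $$ (i, pick J j')"
    using submatrix_index[OF card_less_less_card[OF i] j'] pick_card_in_set[OF i(1)] j'
    by (simp add: dim_submatrix card_less_less_card[OF i])
  also have "\<dots> = row A i $ pick J j'" using i pick_le[OF j'] by simp
  also have "\<dots> = (if pick J j' = j then 1 else 0)" using row pick_le[OF j'] by (simp add: unit_vec_def)
  also have "\<dots> = (if j' = card {a \<in> J. a < j} then 1 else 0)"
    using pick_eq_iff_card_less[OF J j] by simp
  finally show "row (submatrix A I J) (card {a \<in> I. a < i}) $ j'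
      = unit_vec (dim_col (submatrix A I J)) (card {a \<in> J. a < j}) $ j'"
    using j' by (simp add: dim_submatrix unit_vec_def)
qed (simp add: dim_submatrix)

lemma submatrix_UNIV_index:
  assumes "i < dim_row A" "j < card {j. j < dim_col A \<and> j \<in> J}"
  shows "submatrix A UNIV J $$ (i, j) = A $$ (i, pick J j)"
  using submatrix_index[of i A UNIV j J] assms by (simp add: pick_UNIV)

section \<open>Off-diagonal vec positions\<close>

lemma mult_add_less_square:
  fixes a b M :: nat
  assumes "a < M" "b < M"
  shows "a * M + b < M * M"
proof -
  have "(a + 1) * M \<le> M * M" using assms by (intro mult_le_mono1) simp
  then show ?thesis using assms by simp
qed

lemma mult_add_div_mod:
  fixes a b M :: nat
  assumes "b < M"
  shows "(a * M + b) div M = a" "(a * M + b) mod M = b"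
  using assms by simp_all

text \<open>Besides the off-diagonal positions below M * M this set contains every k \<ge> M * M,
  so it is infinite.\<close>
definition offdiag_pos :: "nat \<Rightarrow> nat set" where
  "offdiag_pos M = {k. Suc k \<notin> diag_idx M}"

lemma Suc_mem_diag_idx_iff: "Suc k \<in> diag_idx M \<longleftrightarrow> (\<exists>i<M. k = i * M + i)"
proof
  assume "Suc k \<in> diag_idx M"
  then obtain i where "1 \<le> i" "i \<le> M" "Suc k = (i - 1) * M + i" unfolding diag_idx_def by blast
  then show "\<exists>i<M. k = i * M + i" by (intro exI[of _ "i - 1"]) (cases i, auto)
next
  assume "\<exists>i<M. k = i * M + i"
  then obtain i where "i < M" "k = i * M + i" by blast
  then show "Suc k \<in> diag_idx M" unfolding diag_idx_def by (intro CollectI exI[of _ "Suc i"]) auto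
qed

lemma mem_offdiag_pos_iff: "k \<in> offdiag_pos M \<longleftrightarrow> (k < M * M \<longrightarrow> k mod M \<noteq> k div M)"
proof -
  have "(\<exists>i<M. k = i * M + i) \<longleftrightarrow> k < M * M \<and> k mod M = k div M"
  proof
    assume "\<exists>i<M. k = i * M + i"
    then obtain i where "i < M" "k = i * M + i" by blast
    then show "k < M * M \<and> k mod M = k div M"
      using mult_add_less_square[of i M i] by (simp add: mult_add_div_mod)
  next
    assume "k < M * M \<and> k mod M = k div M"
    then show "\<exists>i<M. k = i * M + i"
      using div_mult_mod_eq[of k M] by (intro exI[of _ "k div M"]) (auto simp: less_mult_imp_div_less)
  qed
  then show ?thesis unfolding offdiag_pos_def Suc_mem_diag_idx_iff by blast
qed

lemma mult_add_mem_offdiag_pos_iff: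
  assumes "a < M" "b < M"
  shows "a * M + b \<in> offdiag_pos M \<longleftrightarrow> a \<noteq> b"
  using assms mult_add_less_square[OF assms] by (auto simp: mem_offdiag_pos_iff)

lemma infinite_offdiag_pos: "infinite (offdiag_pos M)"
proof -
  have "{M * M..} \<subseteq> offdiag_pos M" by (auto simp: mem_offdiag_pos_iff)
  then show ?thesis using infinite_Ici infinite_super by blast
qed

lemma card_offdiag_pos: "card {k. k < M * M \<and> k \<in> offdiag_pos M} = M * M - M"
proof -
  have diag: "{k. k < M * M \<and> k \<notin> offdiag_pos M} = (\<lambda>i. i * M + i) ` {..<M}"
    unfolding offdiag_pos_def Suc_mem_diag_idx_iff using mult_add_less_square by blast
  have "inj_on (\<lambda>i. i * M + i) {..<M}"
  proof (rule inj_onI)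
    fix x y assume "x * M + x = y * M + y"
    then have "x * Suc M = y * Suc M" by (simp only: mult_Suc_right add.commute)
    then show "x = y" unfolding mult_cancel2 by simp
  qed
  then have "card {k. k < M * M \<and> k \<notin> offdiag_pos M} = M" by (simp add: diag card_image)
  moreover have "{k. k < M * M \<and> k \<in> offdiag_pos M} = {..<M * M} - {k. k < M * M \<and> k \<notin> offdiag_pos M}"
    by auto
  ultimately show ?thesis by (simp add: card_Diff_subset[of "{k. k < M * M \<and> k \<notin> offdiag_pos M}"] subset_eq)
qed

lemma half_add_half_square_minus_self:
  fixes M :: nat
  shows "(M * M - M) div 2 + (M * M - M) div 2 = M * M - M"
proof -
  have "even (M * M - M)" by (cases "even M") auto
  then show ?thesis using even_two_times_div_two by fastforce
qed

text \<open>The column of F that belongs to the vec position a * M + b.\<close>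
definition offdiag_index :: "nat \<Rightarrow> nat \<Rightarrow> nat \<Rightarrow> nat" where
  "offdiag_index M a b = card {k \<in> offdiag_pos M. k < a * M + b}"

lemma offdiag_index_less:
  assumes "a < M" "b < M" "a \<noteq> b"
  shows "offdiag_index M a b < M * M - M"
  using card_less_less_card[of "a * M + b" "offdiag_pos M" "M * M"] assms
  by (simp add: offdiag_index_def card_offdiag_pos mult_add_mem_offdiag_pos_iff mult_add_less_square)

lemma pick_offdiag_pos_eq_iff:
  assumes "a < M" "b < M" "a \<noteq> b"
  shows "pick (offdiag_pos M) j = a * M + b \<longleftrightarrow> j = offdiag_index M a b"
  unfolding offdiag_index_def using assms
  by (intro pick_eq_iff_card_less infinite_offdiag_pos) (simp add: mult_add_mem_offdiag_pos_iff)

lemma offdiag_indexE: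
  assumes "j < M * M - M"
  obtains a b where "a < M" "b < M" "a \<noteq> b" "j = offdiag_index M a b"
proof -
  let ?k = "pick (offdiag_pos M) j"
  have k: "?k \<in> offdiag_pos M" "?k < M * M"
    using pick_in_set_inf[OF infinite_offdiag_pos[of M]] pick_le[of j "M * M"] assms
    by (auto simp: card_offdiag_pos)
  moreover have "0 < M" using k(2) by (cases M) auto
  ultimately have "?k div M < M" "?k mod M < M" "?k div M \<noteq> ?k mod M" "?k = ?k div M * M + ?k mod M"
    by (auto simp: mem_offdiag_pos_iff less_mult_imp_div_less)
  moreover have "j = offdiag_index M (?k div M) (?k mod M)"
    using card_pick_inf[OF infinite_offdiag_pos[of M], of j] calculation(4) by (simp add: offdiag_index_def)
  ultimately show ?thesis using that by blast
qed

section \<open>The matrix Psi\<close>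

lemma Psi_carrier: "Psi D \<in> carrier_mat (2 * D - 2) (2 * D - 2)"
proof -
  have "2 * D - 2 = (D - 1) + (D - 1)" by simp
  then show ?thesis unfolding Psi_def by auto
qed

lemma invertible_Psi: "invertible_mat (Psi D)"
proof -
  let ?n = "D - 1"
  let ?I = "1\<^sub>m ?n :: complex mat"
  define Q where "Q = four_block_mat ((1/2) \<cdot>\<^sub>m ?I) ((1/2) \<cdot>\<^sub>m ?I) ((\<i>/2) \<cdot>\<^sub>m ?I) ((-\<i>/2) \<cdot>\<^sub>m ?I)"
  have "Psi D * Q = four_block_mat ?I (0\<^sub>m ?n ?n) (0\<^sub>m ?n ?n) ?I"
    unfolding Psi_def Q_def
    by (subst mult_four_block_mat[of _ ?n ?n _ ?n _ ?n])
       (auto intro!: cong_four_block_mat eq_matI simp: field_simps)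
  moreover have "Q * Psi D = four_block_mat ?I (0\<^sub>m ?n ?n) (0\<^sub>m ?n ?n) ?I"
    unfolding Psi_def Q_def
    by (subst mult_four_block_mat[of _ ?n ?n _ ?n _ ?n])
       (auto intro!: cong_four_block_mat eq_matI simp: field_simps)
  moreover have "Psi D \<in> carrier_mat (?n + ?n) (?n + ?n)" "Q \<in> carrier_mat (?n + ?n) (?n + ?n)"
    unfolding Psi_def Q_def by auto
  ultimately show ?thesis unfolding invertible_mat_def inverts_mat_def
    by (intro conjI exI[of _ Q]) auto
qed

section \<open>Lags and the matrix J-bar\<close>

lemma finite_diffset: "finite (diffset M m)"
proof -
  have "diffset M m = (\<lambda>(p, q). \<bar>m p - m q\<bar>) ` ({1..M} \<times> {1..M})"
    unfolding diffset_def by force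
  then show ?thesis by simp
qed

lemma lag_mem_diffset: "n < numD M m \<Longrightarrow> lag M m n \<in> diffset M m"
  unfolding lag_def numD_def using finite_diffset by (metis nth_mem length_sorted_list_of_set set_sorted_list_of_set)

lemma lag_eq_lag_iff:
  assumes "n < numD M m" "n' < numD M m"
  shows "lag M m n = lag M m n' \<longleftrightarrow> n = n'"
  unfolding lag_def using assms
  by (intro nth_eq_iff_index_eq distinct_sorted_list_of_set) (simp_all add: numD_def)

lemma lag_nonneg: "n < numD M m \<Longrightarrow> lag M m n \<ge> 0"
  using lag_mem_diffset[of n M m] unfolding diffset_def by auto

lemma lag_pos:
  assumes "0 < n" "n < numD M m"
  shows "lag M m n > 0"
proof -
  have "lag M m 0 < lag M m n" unfolding lag_def
    using assms sorted_wrt_nth_less[OF strict_sorted_list_of_set] by (simp add: numD_def)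
  with lag_nonneg[of 0 M m] assms show ?thesis by simp
qed

text \<open>Column c of J marks the positions (p, q) with m p - m q = signed_lag M m c.\<close>
definition signed_lag :: "nat \<Rightarrow> (nat \<Rightarrow> int) \<Rightarrow> nat \<Rightarrow> int" where
  "signed_lag M m c = (if c < numD M m - 1 then - lag M m (numD M m - 1 - c)
                       else lag M m (c - (numD M m - 1)))"

lemma signed_lag_neg: "c < numD M m - 1 \<Longrightarrow> signed_lag M m c < 0"
  using lag_pos[of "numD M m - 1 - c" M m] unfolding signed_lag_def by simp

lemma signed_lag_pos:
  assumes "numD M m - 1 < c" "c < 2 * numD M m - 1"
  shows "signed_lag M m c > 0"
  using assms lag_pos[of "c - (numD M m - 1)" M m] unfolding signed_lag_def by simp

lemma signed_lag_nonneg: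
  assumes "numD M m - 1 \<le> c" "c < 2 * numD M m - 1"
  shows "signed_lag M m c \<ge> 0"
  using assms lag_nonneg[of "c - (numD M m - 1)" M m] unfolding signed_lag_def by simp

lemma inj_on_signed_lag: "inj_on (signed_lag M m) {..<2 * numD M m - 1}"
proof (intro inj_onI)
  fix c c' assume c: "c \<in> {..<2 * numD M m - 1}" "c' \<in> {..<2 * numD M m - 1}"
    and eq: "signed_lag M m c = signed_lag M m c'"
  let ?D = "numD M m"
  have sign: "signed_lag M m x < 0 \<longleftrightarrow> x < ?D - 1" if "x < 2 * ?D - 1" for x
    using signed_lag_neg[of x M m] signed_lag_nonneg[of M m x] that by (cases "x < ?D - 1") auto
  have "c < ?D - 1 \<longleftrightarrow> c' < ?D - 1" using sign[of c] sign[of c'] c eq by simp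
  then consider "c < ?D - 1" "c' < ?D - 1" | "\<not> c < ?D - 1" "\<not> c' < ?D - 1" by blast
  then show "c = c'"
  proof cases
    case 1
    then show ?thesis using eq lag_eq_lag_iff[of "?D - 1 - c" M m "?D - 1 - c'"]
      unfolding signed_lag_def by auto
  next
    case 2
    then show ?thesis using eq c lag_eq_lag_iff[of "c - (?D - 1)" M m "c' - (?D - 1)"]
      unfolding signed_lag_def by auto
  qed
qed

lemma signed_lag_diffE:
  assumes "c < 2 * numD M m - 1"
  obtains p q where "p \<in> {1..M}" "q \<in> {1..M}" "m p - m q = signed_lag M m c"
proof -
  let ?n = "if c < numD M m - 1 then numD M m - 1 - c else c - (numD M m - 1)"
  have "?n < numD M m" using assms by auto
  from lag_mem_diffset[OF this] obtain p q where
    pq: "p \<in> {1..M}" "q \<in> {1..M}" "lag M m ?n = \<bar>m p - m q\<bar>"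
    unfolding diffset_def by auto
  show ?thesis
  proof (cases "(m p - m q \<ge> 0) = (c \<ge> numD M m - 1)")
    case True then show ?thesis using that[of p q] pq unfolding signed_lag_def by (auto split: if_splits)
  next
    case False then show ?thesis using that[of q p] pq unfolding signed_lag_def by (auto split: if_splits)
  qed
qed

lemma vecm_index:
  "k < dim_row A * dim_col A \<Longrightarrow> vecm A $ k = A $$ (k mod dim_row A, k div dim_row A)"
  unfolding vecm_def by simp

lemma Lmat_index:
  "i < M \<Longrightarrow> j < M \<Longrightarrow> Lmat M m n $$ (i, j) = (if m (i + 1) - m (j + 1) = lag M m n then 1 else 0)"
  unfolding Lmat_def by simp

lemma Jmat_index:
  assumes "k < M * M" "c < 2 * numD M m - 1"
  shows "Jmat M m $$ (k, c)
         = (if m (k mod M + 1) - m (k div M + 1) = signed_lag M m c then 1 else 0)"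
proof -
  have "0 < M" using assms(1) by (cases "M = 0") auto
  then have "k div M < M" "k mod M < M" using assms by (auto simp: less_mult_imp_div_less)
  moreover have "Jmat M m $$ (k, c) = (if c < numD M m - 1
      then vecm (transpose_mat (Lmat M m (numD M m - 1 - c))) $ k
      else vecm (Lmat M m (c - (numD M m - 1))) $ k)"
    using assms unfolding Jmat_def Let_def by simp
  moreover have "dim_row (Lmat M m n) = M" "dim_col (Lmat M m n) = M" for n
    unfolding Lmat_def by simp_all
  ultimately show ?thesis using assms by (auto simp: vecm_index Lmat_index signed_lag_def)
qed

lemma Jmat_carrier: "Jmat M m \<in> carrier_mat (M * M) (2 * numD M m - 1)"
  unfolding Jmat_def Let_def by simp

lemma Jmat_unit_rowE:
  assumes "c < 2 * numD M m - 1" "c \<noteq> numD M m - 1"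
  obtains k where "k < M * M" "k \<in> offdiag_pos M" "row (Jmat M m) k = unit_vec (2 * numD M m - 1) c"
proof -
  obtain p q where pq: "p \<in> {1..M}" "q \<in> {1..M}" "m p - m q = signed_lag M m c"
    using signed_lag_diffE[OF assms(1)] .
  have "signed_lag M m c \<noteq> 0"
    using assms signed_lag_neg[of c M m] signed_lag_pos[of M m c] by (cases "c < numD M m - 1") auto
  with pq have "p \<noteq> q" by auto
  define a b where "a = q - 1" and "b = p - 1"
  have ab: "a < M" "b < M" "q = a + 1" "p = b + 1" using pq unfolding a_def b_def by auto
  define k where "k = a * M + b"
  have k: "k div M + 1 = q" "k mod M + 1 = p" "k < M * M" "k \<in> offdiag_pos M"
    using ab \<open>p \<noteq> q\<close> unfolding k_def
    by (auto simp: mult_add_div_mod mult_add_less_square mult_add_mem_offdiag_pos_iff)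
  have row: "row (Jmat M m) k = unit_vec (2 * numD M m - 1) c"
  proof (rule eq_vecI)
    fix c' assume "c' < dim_vec (unit_vec (2 * numD M m - 1) c)"
    then have c': "c' < 2 * numD M m - 1" by simp
    have "row (Jmat M m) k $ c' = (if signed_lag M m c = signed_lag M m c' then 1 else 0)"
      using Jmat_carrier[of M m] c' k pq by (simp add: Jmat_index)
    also have "\<dots> = unit_vec (2 * numD M m - 1) c $ c'"
      using inj_on_signed_lag[of M m] c' assms(1) by (auto simp: unit_vec_def inj_on_def)
    finally show "row (Jmat M m) k $ c' = unit_vec (2 * numD M m - 1) c $ c'" .
  qed (use Jmat_carrier[of M m] in simp)
  show ?thesis by (rule that[OF k(3,4) row])
qed

lemma card_cols_without_lag0: "card {c. c < 2 * D - 1 \<and> c \<in> {c. Suc c \<noteq> D}} = 2 * D - 2"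
proof (cases D)
  case 0
  then show ?thesis by simp
next
  case (Suc d)
  then have "{c. c < 2 * D - 1 \<and> c \<in> {c. Suc c \<noteq> D}} = {..<2 * d + 1} - {d}" by auto
  then show ?thesis using Suc by simp
qed

lemma infinite_cols_without_lag0: "infinite {c :: nat. Suc c \<noteq> D}"
proof -
  have "{D..} \<subseteq> {c. Suc c \<noteq> D}" by auto
  then show ?thesis using infinite_Ici infinite_super by blast
qed

lemma Jbar_carrier: "Jbar M m \<in> carrier_mat (M * M - M) (2 * numD M m - 2)"
proof -
  have "dim_row (Jmat M m) = M * M" "dim_col (Jmat M m) = 2 * numD M m - 1"
    using Jmat_carrier[of M m] by auto
  then show ?thesis unfolding Jbar_def offdiag_pos_def[symmetric]
    by (intro carrier_matI) (simp_all only: dim_submatrix card_offdiag_pos card_cols_without_lag0)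
qed

lemma rank_Jbar: "vec_space.rank (M * M - M) (Jbar M m) = 2 * numD M m - 2"
proof (rule rank_eq_dim_col_if_unit_rows[OF Jbar_carrier])
  fix c assume c: "c < 2 * numD M m - 2"
  let ?C = "{c. Suc c \<noteq> numD M m}"
  define c' where "c' = pick ?C c"
  have c'C: "c' \<in> ?C" unfolding c'_def by (rule pick_in_set_inf[OF infinite_cols_without_lag0])
  have "c' < 2 * numD M m - 1"
    unfolding c'_def by (rule pick_le) (use c card_cols_without_lag0[of "numD M m"] in simp)
  moreover have "c' \<noteq> numD M m - 1" using c'C calculation by auto
  ultimately obtain k where k: "k < M * M" "k \<in> offdiag_pos M"
    and row_k: "row (Jmat M m) k = unit_vec (2 * numD M m - 1) c'"
    by (rule Jmat_unit_rowE)
  have "row (Jbar M m) (card {a \<in> offdiag_pos M. a < k})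
        = unit_vec (dim_col (Jbar M m)) (card {a \<in> ?C. a < c'})"
    unfolding Jbar_def offdiag_pos_def[symmetric]
    by (rule row_submatrix_unit_vec[OF infinite_cols_without_lag0 k(2) _ c'C])
       (use k row_k Jmat_carrier[of M m] in auto)
  also have "card {a \<in> ?C. a < c'} = c"
    unfolding c'_def by (rule card_pick_inf[OF infinite_cols_without_lag0])
  finally have "row (Jbar M m) (card {a \<in> offdiag_pos M. a < k}) = unit_vec (2 * numD M m - 2) c"
    using Jbar_carrier[of M m] by simp
  moreover have "card {a \<in> offdiag_pos M. a < k} < M * M - M"
    using card_less_less_card[OF k(2,1)] by (simp add: card_offdiag_pos)
  ultimately show "\<exists>i < M * M - M. row (Jbar M m) i = unit_vec (2 * numD M m - 2) c" by blast
qed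

section \<open>The matrix F\<close>

lemma two_sidx:
  assumes "1 \<le> p" "p < q" "q \<le> M"
  shows "2 * int (sidx M p q) = 2 * (int p * int M) - 2 * int M + 2 * int q - int p * int p - int p"
proof -
  have "(p - 1) * (p + 1) \<le> (p - 1) * M" using assms by (intro mult_le_mono2) simp
  moreover have "p * (p + 1) = (p - 1) * (p + 1) + (p + 1)" using assms(1) by (cases p) simp_all
  moreover have "p * (p + 1) div 2 \<le> p * (p + 1)" by (rule div_le_dividend)
  ultimately have "p * (p + 1) div 2 \<le> (p - 1) * M + q" using assms by linarith
  then have "int (sidx M p q) = int ((p - 1) * M + q) - int (p * (p + 1) div 2)"
    unfolding sidx_def by (simp only: of_nat_diff)
  moreover have "int ((p - 1) * M + q) = (int p - 1) * int M + int q"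
    using assms(1) by (simp add: of_nat_diff)
  moreover have "2 * int (p * (p + 1) div 2) = int p * (int p + 1)"
  proof -
    have "2 * (p * (p + 1) div 2) = p * (p + 1)" by simp
    then have "int (2 * (p * (p + 1) div 2)) = int (p * (p + 1))" by (rule arg_cong)
    then show ?thesis by (simp only: of_nat_mult of_nat_add of_nat_1 of_nat_numeral)
  qed
  ultimately show ?thesis by (simp add: algebra_simps)
qed

lemma sidx_less_sidx:
  assumes "1 \<le> p" "p < q" "q \<le> M" "p' < q'" "q' \<le> M" "p < p'"
  shows "sidx M p q < sidx M p' q'"
proof -
  have "(int p' - int p - 1) * (int p' + 1) \<le> (int p' - int p - 1) * int M"
    using assms by (intro mult_left_mono) auto
  then have "int p' * int p' - int p * int p' - int p - 1 \<le> int p' * int M - int p * int M - int M"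
    by (simp add: algebra_simps)
  moreover have "0 \<le> int p' * int p' - 2 * (int p * int p') + int p * int p"
    using zero_le_power2[of "int p' - int p"] by (simp add: power2_eq_square algebra_simps)
  moreover note two_sidx[OF assms(1-3)] two_sidx[of p' q' M]
  ultimately have "2 * int (sidx M p q) < 2 * int (sidx M p' q')"
    using assms by (simp add: algebra_simps)
  then show ?thesis by simp
qed

lemma sidx_pos:
  assumes "1 \<le> p" "p < q" "q \<le> M"
  shows "0 < sidx M p q"
proof -
  have "(int p - 1) * (int p + 1) \<le> (int p - 1) * int M" using assms by (intro mult_left_mono) auto
  then have "int p * int p - 1 \<le> int p * int M - int M" by (simp add: algebra_simps)
  moreover have "int p \<le> int p * int p" using mult_left_mono[of 1 "int p" "int p"] assms(1) by simp
  ultimately have "0 < 2 * int (sidx M p q)" using two_sidx[OF assms] assms by linarith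
  then show ?thesis by simp
qed

lemma sidx_le:
  assumes "1 \<le> p" "p < q" "q \<le> M"
  shows "sidx M p q \<le> (M * M - M) div 2"
proof -
  have "0 \<le> (int M - int p) * (int M - int p - 1)" using assms by simp
  then have "0 \<le> int M * int M - 2 * (int p * int M) + int p * int p - int M + int p"
    by (simp add: algebra_simps)
  with two_sidx[OF assms] assms have "2 * int (sidx M p q) \<le> int M * int M - int M"
    by linarith
  also have "\<dots> = int (M * M - M)" by (simp add: of_nat_diff)
  finally have "2 * sidx M p q \<le> M * M - M" by linarith
  then show ?thesis by linarith
qed

lemma pq_of_sidx:
  assumes "1 \<le> p" "p < q" "q \<le> M"
  shows "pq_of M (sidx M p q) = (p, q)"
  unfolding pq_of_def
proof (rule the_equality)
  fix pq :: "nat \<times> nat"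
  assume pq: "1 \<le> fst pq \<and> fst pq < snd pq \<and> snd pq \<le> M \<and> sidx M (fst pq) (snd pq) = sidx M p q"
  have "fst pq = p"
    using sidx_less_sidx[of p q M "fst pq" "snd pq"] sidx_less_sidx[of "fst pq" "snd pq" M p q] pq assms
    by (metis less_irrefl nat_neq_iff)
  moreover have "snd pq = q" using two_sidx[OF assms] two_sidx[of "fst pq" "snd pq" M] pq calculation by simp
  ultimately show "pq = (p, q)" by (simp add: prod_eq_iff)
qed (use assms in simp)

lemma Fmat_index:
  assumes "i < M * M - M" "j < M * M - M"
  shows "Fmat M $$ (i, j) = (if i < (M * M - M) div 2 then Fdd M $$ (i, j) / 2
                             else \<i> * Ftil M $$ (i - (M * M - M) div 2, j) / 2)"
  using assms unfolding Fmat_def Let_def by simp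

lemma Fdd_Ftil_index:
  assumes "r < (M * M - M) div 2" "j < M * M - M" "pq_of M (Suc r) = (p, q)"
  defines "k \<equiv> pick (offdiag_pos M) j"
  shows "Fdd M $$ (r, j) = (if k = (p - 1) * M + (q - 1) then 1 else 0) + (if k = (q - 1) * M + (p - 1) then 1 else 0)"
    and "Ftil M $$ (r, j) = (if k = (p - 1) * M + (q - 1) then 1 else 0) - (if k = (q - 1) * M + (p - 1) then 1 else 0)"
proof -
  have k: "k < M * M" using pick_le[of j "M * M"] assms by (simp add: card_offdiag_pos)
  have dims: "dim_row (Fdd_full M) = (M * M - M) div 2" "dim_col (Fdd_full M) = M * M"
    "dim_row (Ftil_full M) = (M * M - M) div 2" "dim_col (Ftil_full M) = M * M"
    unfolding Fdd_full_def Ftil_full_def by simp_all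
  show "Fdd M $$ (r, j) = (if k = (p - 1) * M + (q - 1) then 1 else 0) + (if k = (q - 1) * M + (p - 1) then 1 else 0)"
    unfolding Fdd_def offdiag_pos_def[symmetric] using assms k dims
    by (simp add: submatrix_UNIV_index card_offdiag_pos Fdd_full_def kron_e_def)
  show "Ftil M $$ (r, j) = (if k = (p - 1) * M + (q - 1) then 1 else 0) - (if k = (q - 1) * M + (p - 1) then 1 else 0)"
    unfolding Ftil_def offdiag_pos_def[symmetric] using assms k dims
    by (simp add: submatrix_UNIV_index card_offdiag_pos Ftil_full_def kron_e_def)
qed

lemma Fmat_carrier: "Fmat M \<in> carrier_mat (M * M - M) (M * M - M)"
  unfolding Fmat_def Let_def by simp

lemma rows_Fmat:
  assumes "a < b" "b < M"
  defines "r \<equiv> sidx M (a + 1) (b + 1) - 1"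
    and "u \<equiv> unit_vec (M * M - M) (offdiag_index M a b)"
    and "w \<equiv> unit_vec (M * M - M) (offdiag_index M b a)"
  shows "r < (M * M - M) div 2" "(M * M - M) div 2 + r < M * M - M"
    and "row (Fmat M) r = (1 / 2) \<cdot>\<^sub>v (u + w)"
    and "row (Fmat M) ((M * M - M) div 2 + r) = (\<i> / 2) \<cdot>\<^sub>v (u - w)"
proof -
  let ?N = "(M * M - M) div 2"
  have ab: "1 \<le> a + 1" "a + 1 < b + 1" "b + 1 \<le> M" using assms by auto
  show r: "r < ?N" using sidx_pos[OF ab] sidx_le[OF ab] unfolding r_def by linarith
  with half_add_half_square_minus_self[of M] show N: "?N + r < M * M - M" by linarith
  have pq: "pq_of M (Suc r) = (a + 1, b + 1)"
    using pq_of_sidx[OF ab] sidx_pos[OF ab] unfolding r_def by simp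
  have pick_iff: "pick (offdiag_pos M) j = a * M + b \<longleftrightarrow> j = offdiag_index M a b"
    "pick (offdiag_pos M) j = b * M + a \<longleftrightarrow> j = offdiag_index M b a" for j
    using pick_offdiag_pos_eq_iff assms by auto
  have idx: "offdiag_index M a b < M * M - M" "offdiag_index M b a < M * M - M"
    using offdiag_index_less assms by auto
  show "row (Fmat M) r = (1 / 2) \<cdot>\<^sub>v (u + w)"
  proof (rule eq_vecI)
    fix j assume "j < dim_vec ((1 / 2) \<cdot>\<^sub>v (u + w))"
    then have j: "j < M * M - M" unfolding u_def w_def by simp
    show "row (Fmat M) r $ j = ((1 / 2) \<cdot>\<^sub>v (u + w)) $ j"
      using r j N Fmat_carrier[of M] Fmat_index[of r M j] Fdd_Ftil_index(1)[OF r j pq] idx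
      by (simp add: pick_iff u_def w_def unit_vec_def add_divide_distrib)
  qed (use Fmat_carrier[of M] in \<open>simp add: u_def w_def\<close>)
  show "row (Fmat M) (?N + r) = (\<i> / 2) \<cdot>\<^sub>v (u - w)"
  proof (rule eq_vecI)
    fix j assume "j < dim_vec ((\<i> / 2) \<cdot>\<^sub>v (u - w))"
    then have j: "j < M * M - M" unfolding u_def w_def by simp
    show "row (Fmat M) (?N + r) $ j = ((\<i> / 2) \<cdot>\<^sub>v (u - w)) $ j"
      using r j N Fmat_carrier[of M] Fmat_index[of "?N + r" M j] Fdd_Ftil_index(2)[OF r j pq] idx
      by (simp add: pick_iff u_def w_def unit_vec_def diff_divide_distrib right_diff_distrib)
  qed (use Fmat_carrier[of M] in \<open>simp add: u_def w_def\<close>)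
qed

lemma Fmat_kernel_index_eq_0:
  assumes v: "v \<in> carrier_vec (M * M - M)" and Fv: "Fmat M *\<^sub>v v = 0\<^sub>v (M * M - M)"
    and ab: "a < b" "b < M"
  shows "v $ offdiag_index M a b = 0" "v $ offdiag_index M b a = 0"
proof -
  let ?n = "M * M - M" and ?N = "(M * M - M) div 2"
  let ?r = "sidx M (a + 1) (b + 1) - 1"
  let ?u = "unit_vec ?n (offdiag_index M a b) :: complex vec"
  let ?w = "unit_vec ?n (offdiag_index M b a) :: complex vec"
  have idx: "offdiag_index M a b < ?n" "offdiag_index M b a < ?n"
    using offdiag_index_less ab by auto
  have rows: "?r < ?n" "?N + ?r < ?n" using rows_Fmat(1,2)[OF ab] by linarith+
  have "0 = (Fmat M *\<^sub>v v) $ ?r" using Fv rows by simp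
  also have "\<dots> = ((1 / 2) \<cdot>\<^sub>v (?u + ?w)) \<bullet> v"
    using rows rows_Fmat(3)[OF ab] Fmat_carrier[of M] by simp
  also have "\<dots> = (v $ offdiag_index M a b + v $ offdiag_index M b a) / 2"
    using v idx by (simp add: add_scalar_prod_distrib[of _ ?n])
  finally have sum: "v $ offdiag_index M a b + v $ offdiag_index M b a = 0" by simp
  have "0 = (Fmat M *\<^sub>v v) $ (?N + ?r)" using Fv rows by simp
  also have "\<dots> = ((\<i> / 2) \<cdot>\<^sub>v (?u - ?w)) \<bullet> v"
    using rows rows_Fmat(4)[OF ab] Fmat_carrier[of M] by simp
  also have "\<dots> = \<i> * (v $ offdiag_index M a b - v $ offdiag_index M b a) / 2"
    using v idx by (simp add: minus_scalar_prod_distrib[of _ ?n])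
  finally have diff: "v $ offdiag_index M a b - v $ offdiag_index M b a = 0" by simp
  from sum diff show "v $ offdiag_index M a b = 0" "v $ offdiag_index M b a = 0"
    by (simp_all add: algebra_simps)
qed

lemma invertible_Fmat: "invertible_mat (Fmat M)"
proof (rule invertible_mat_if_trivial_kernel[OF Fmat_carrier])
  fix v assume v: "v \<in> carrier_vec (M * M - M)" and Fv: "Fmat M *\<^sub>v v = 0\<^sub>v (M * M - M)"
  show "v = 0\<^sub>v (M * M - M)"
  proof (rule eq_vecI)
    fix j assume "j < dim_vec (0\<^sub>v (M * M - M) :: complex vec)"
    then obtain a b where "a < M" "b < M" "a \<noteq> b" "j = offdiag_index M a b"
      by (auto elim: offdiag_indexE)
    then show "v $ j = 0\<^sub>v (M * M - M) $ j"
      using Fmat_kernel_index_eq_0[OF v Fv] by (cases "a < b") (auto simp: offdiag_index_less)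
  qed (use v in simp)
qed

theorem lemma2:
  fixes M :: nat and m :: "nat \<Rightarrow> int"
  assumes "M \<ge> 1" and "inj_on m {1..M}"
  shows "Psi (numD M m) \<in> carrier_mat (2 * numD M m - 2) (2 * numD M m - 2)
         \<and> invertible_mat (Psi (numD M m))
         \<and> Fmat M \<in> carrier_mat (M*M - M) (M*M - M)
         \<and> invertible_mat (Fmat M)
         \<and> Jbar M m \<in> carrier_mat (M*M - M) (2 * numD M m - 2)
         \<and> vec_space.rank (M*M - M) (Jbar M m) = 2 * numD M m - 2"
  using Psi_carrier invertible_Psi Fmat_carrier invertible_Fmat Jbar_carrier rank_Jbar by blast

end
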